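(* Let $\mathbb{K}$ be a field of characteristic zero and $m$ a positive integer. Let $V_m$ be the set of all rational functions of the form $\sum_{i=1}^I a_i/b_i^m$ (with $I\ge 0$), where $a_i,b_i\in\mathbb{K}(x,y)[z]$, $\deg_z(a_i)<\deg_z(b_i)$, and the $b_i$ are distinct irreducible polynomials in $\mathbb{K}(x,y)[z]$. Let $f\in V_m$ and $P=\sum_{i,j,k}p_{i,j,k}S_x^iS_y^jS_z^k$ with $p_{i,j,k}\in\mathbb{K}(x,y)$. Then $P(f)\in V_m$.
   Context: The action of $P$ on a rational function $f\in\mathbb{K}(x,y,z)$ is $P(f)=\sum_{i,j,k}p_{i,j,k}\,f(x+i,y+j,z+k)$. *)

theory Defs
  imports "HOL-Computational_Algebra.Polynomial" "HOL-Computational_Algebra.Fraction_Field"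
    "HOL-Computational_Algebra.Factorial_Ring"
begin

text \<open>Model: K[x][y] = 'k poly poly (outer variable y, inner variable x);
  K(x,y) = ('k poly poly) fract;  K(x,y)[z] = K(x,y) poly;
  K(x,y,z) = (K(x,y)[z]) fract, the fraction field of K(x,y)[z].\<close>

type_synonym 'k rat2 = "'k poly poly fract"
type_synonym 'k rat3 = "'k rat2 poly fract"

definition fract_lift :: "('a::idom \<Rightarrow> 'a) \<Rightarrow> 'a fract \<Rightarrow> 'a fract" where
  "fract_lift h f = (SOME g. \<exists>a b. b \<noteq> 0 \<and> f = Fract a b \<and> g = Fract (h a) (h b))"

definition shx_pp :: "'k::field poly poly \<Rightarrow> 'k poly poly" where
  "shx_pp q = map_poly (\<lambda>c. pcompose c [:1, 1:]) q"
definition shy_pp :: "'k::field poly poly \<Rightarrow> 'k poly poly" where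
  "shy_pp q = pcompose q [:1, 1:]"

definition shx_p :: "'k::field rat2 poly \<Rightarrow> 'k rat2 poly" where
  "shx_p b = map_poly (fract_lift shx_pp) b"
definition shy_p :: "'k::field rat2 poly \<Rightarrow> 'k rat2 poly" where
  "shy_p b = map_poly (fract_lift shy_pp) b"
definition shz_p :: "'k::field rat2 poly \<Rightarrow> 'k rat2 poly" where
  "shz_p b = pcompose b [:1, 1:]"

definition Sx :: "'k::field rat3 \<Rightarrow> 'k rat3" where "Sx = fract_lift shx_p"
definition Sy :: "'k::field rat3 \<Rightarrow> 'k rat3" where "Sy = fract_lift shy_p"
definition Sz :: "'k::field rat3 \<Rightarrow> 'k rat3" where "Sz = fract_lift shz_p"

definition emb2 :: "'k::field rat2 \<Rightarrow> 'k rat3" where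
  "emb2 c = Fract [:c:] 1"

definition apply_op :: "(nat \<times> nat \<times> nat \<Rightarrow> 'k::field rat2) \<Rightarrow> 'k rat3 \<Rightarrow> 'k rat3" where
  "apply_op p f = (\<Sum>(i,j,k)\<in>{t. p t \<noteq> 0}. emb2 (p (i,j,k)) * (Sx ^^ i) ((Sy ^^ j) ((Sz ^^ k) f)))"

definition Vm :: "nat \<Rightarrow> 'k::field rat3 set" where
  "Vm m = {f. \<exists>ab :: ('k rat2 poly \<times> 'k rat2 poly) list.
      distinct (map snd ab) \<and>
      (\<forall>(a, b) \<in> set ab. degree a < degree b \<and> irreducible b) \<and>
      f = (\<Sum>(a, b) \<leftarrow> ab. Fract a (b ^ m))}"

end

theory Submission imports Defs begin

text \<open>Each shift S is the fraction-field extension of a ring automorphism of K(x,y)[z] that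
  preserves the z-degree.  Such an automorphism maps irreducible polynomials to irreducible ones
  and distinct polynomials to distinct ones, so it maps a sum of terms a/b^m as in V_m to another
  such sum.  Moreover V_m is closed under addition (terms with the same denominator are merged,
  the numerator degree stays below that of the denominator) and under multiplication by elements
  of K(x,y); hence it is closed under every operator P.\<close>

definition ring_hom :: "('a::comm_ring_1 \<Rightarrow> 'b::comm_ring_1) \<Rightarrow> bool" where
  "ring_hom h \<longleftrightarrow> h 1 = 1 \<and> (\<forall>x y. h (x + y) = h x + h y) \<and> (\<forall>x y. h (x * y) = h x * h y)"

definition ring_aut :: "('a::comm_ring_1 \<Rightarrow> 'a) \<Rightarrow> bool" where
  "ring_aut h \<longleftrightarrow> ring_hom h \<and> bij h"

lemma ring_hom_1: "ring_hom h \<Longrightarrow> h 1 = 1"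
  and ring_hom_add: "ring_hom h \<Longrightarrow> h (x + y) = h x + h y"
  and ring_hom_mult: "ring_hom h \<Longrightarrow> h (x * y) = h x * h y"
  unfolding ring_hom_def by blast+

lemma ring_hom_0: "ring_hom h \<Longrightarrow> h 0 = 0"
  using ring_hom_add[of h 0 0] by simp

lemma ring_hom_power: "ring_hom h \<Longrightarrow> h (x ^ n) = h x ^ n"
  by (induction n) (simp_all add: ring_hom_1 ring_hom_mult)

lemma ring_hom_unit: "ring_hom h \<Longrightarrow> x dvd 1 \<Longrightarrow> h x dvd 1"
  by (metis dvdE dvdI ring_hom_1 ring_hom_mult)

lemma ring_hom_eq_0_iff: "ring_hom h \<Longrightarrow> inj h \<Longrightarrow> h x = 0 \<longleftrightarrow> x = 0"
  by (metis injD ring_hom_0)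

lemma ring_autI:
  assumes "ring_hom h" "\<And>x. g (h x) = x" "\<And>x. h (g x) = x"
  shows "ring_aut h"
  unfolding ring_aut_def using assms by (metis bij_betw_byWitness UNIV_I subsetI)

lemma ring_aut_inv:
  assumes "ring_aut h"
  shows "ring_aut (inv h)"
proof (rule ring_autI)
  have hom: "ring_hom h" and bij: "bij h" using assms unfolding ring_aut_def by auto
  have h_inv: "h (inv h x) = x" for x using bij by (simp add: bij_is_surj surj_f_inv_f)
  have inv_h: "inv h (h x) = x" for x using bij by (simp add: bij_is_inj)
  have "inv h 1 = 1" using inv_h[of 1] by (simp add: ring_hom_1[OF hom])
  moreover have "inv h (x + y) = inv h x + inv h y" for x y
    using inv_h[of "inv h x + inv h y"] by (simp add: ring_hom_add[OF hom] h_inv)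
  moreover have "inv h (x * y) = inv h x * inv h y" for x y
    using inv_h[of "inv h x * inv h y"] by (simp add: ring_hom_mult[OF hom] h_inv)
  ultimately show "ring_hom (inv h)" unfolding ring_hom_def by blast
  show "h (inv h x) = x" "inv h (h x) = x" for x by (fact h_inv inv_h)+
qed

lemma ring_aut_irreducible:
  fixes h :: "'a::idom \<Rightarrow> 'a"
  assumes "ring_aut h" "irreducible x"
  shows "irreducible (h x)"
proof (rule irreducibleI)
  have hom: "ring_hom h" and bij: "bij h" using assms(1) unfolding ring_aut_def by auto
  have hom': "ring_hom (inv h)" using ring_aut_inv[OF assms(1)] unfolding ring_aut_def by blast
  have inv_h: "inv h (h y) = y" for y using bij by (simp add: bij_is_inj)
  show "h x \<noteq> 0" using assms(2) ring_hom_eq_0_iff[OF hom bij_is_inj[OF bij]] by auto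
  show "\<not> h x dvd 1" using assms(2) ring_hom_unit[OF hom', of "h x"] inv_h irreducible_not_unit
    by metis
  fix a b assume "h x = a * b"
  then have "x = inv h a * inv h b" by (metis inv_h hom' ring_hom_mult)
  then have "inv h a dvd 1 \<or> inv h b dvd 1" using assms(2) irreducibleD by blast
  then show "a dvd 1 \<or> b dvd 1"
    using ring_hom_unit[OF hom] bij by (metis bij_inv_eq_iff)
qed

lemma fract_lift_Fract:
  fixes h :: "'a::idom \<Rightarrow> 'a"
  assumes hom: "ring_hom h" and "inj h" and "b \<noteq> 0"
  shows "fract_lift h (Fract a b) = Fract (h a) (h b)"
  unfolding fract_lift_def
proof (rule some_equality)
  have nz: "h c \<noteq> 0" if "c \<noteq> 0" for c using that ring_hom_eq_0_iff[OF hom \<open>inj h\<close>] by blast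
  show "\<exists>a' b'. b' \<noteq> 0 \<and> Fract a b = Fract a' b' \<and> Fract (h a) (h b) = Fract (h a') (h b')"
    using \<open>b \<noteq> 0\<close> by blast
  fix G assume "\<exists>a' b'. b' \<noteq> 0 \<and> Fract a b = Fract a' b' \<and> G = Fract (h a') (h b')"
  then obtain a' b' where "b' \<noteq> 0" "Fract a b = Fract a' b'" "G = Fract (h a') (h b')" by blast
  moreover from this have "h a * h b' = h a' * h b"
    using \<open>b \<noteq> 0\<close> eq_fract(1) ring_hom_mult[OF hom] by metis
  ultimately show "G = Fract (h a) (h b)" using \<open>b \<noteq> 0\<close> nz eq_fract(1) by metis
qed

lemma ring_hom_fract_lift:
  fixes h :: "'a::idom \<Rightarrow> 'a"
  assumes hom: "ring_hom h" and "inj h"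
  shows "ring_hom (fract_lift h)"
  unfolding ring_hom_def
proof (intro conjI allI)
  note lift = fract_lift_Fract[OF assms]
  have nz: "h c \<noteq> 0" if "c \<noteq> 0" for c using that ring_hom_eq_0_iff[OF assms] by blast
  show "fract_lift h 1 = 1" by (simp add: One_fract_def lift ring_hom_1[OF hom])
  fix x y :: "'a fract"
  show "fract_lift h (x + y) = fract_lift h x + fract_lift h y"
    by (cases x, cases y) (simp add: lift nz ring_hom_add[OF hom] ring_hom_mult[OF hom])
  show "fract_lift h (x * y) = fract_lift h x * fract_lift h y"
    by (cases x, cases y) (simp add: lift nz ring_hom_mult[OF hom])
qed

lemma ring_aut_fract_lift:
  fixes h :: "'a::idom \<Rightarrow> 'a"
  assumes "ring_aut h"
  shows "ring_aut (fract_lift h)"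
proof (rule ring_autI)
  have h: "ring_hom h" "inj h" and g: "ring_hom (inv h)" "inj (inv h)"
    using assms ring_aut_inv[OF assms] unfolding ring_aut_def by (auto simp: bij_is_inj)
  have h_inv: "h (inv h x) = x" for x
    using assms unfolding ring_aut_def by (simp add: bij_is_surj surj_f_inv_f)
  have inv_h: "inv h (h x) = x" for x using h(2) by simp
  have nz: "h b \<noteq> 0" "inv h b \<noteq> 0" if "b \<noteq> 0" for b
    using that ring_hom_eq_0_iff[OF h] ring_hom_eq_0_iff[OF g] by auto
  show "ring_hom (fract_lift h)" using h by (rule ring_hom_fract_lift)
  show "fract_lift (inv h) (fract_lift h x) = x" "fract_lift h (fract_lift (inv h) x) = x" for x
    by (cases x; simp add: fract_lift_Fract[OF h] fract_lift_Fract[OF g] nz h_inv inv_h)+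
qed

lemma map_poly_add: "ring_hom h \<Longrightarrow> map_poly h (p + q) = map_poly h p + map_poly h q"
  by (intro poly_eqI) (simp add: coeff_map_poly ring_hom_0 ring_hom_add)

lemma map_poly_mult:
  assumes "ring_hom h"
  shows "map_poly h (p * q) = map_poly h p * map_poly h q"
proof (induction p)
  case (pCons a p)
  have "map_poly h (pCons a p * q) = map_poly h (smult a q) + map_poly h (pCons 0 (p * q))"
    by (simp add: map_poly_add[OF assms])
  also have "\<dots> = smult (h a) (map_poly h q) + pCons 0 (map_poly h p * map_poly h q)"
    using assms by (simp add: map_poly_smult map_poly_pCons ring_hom_0 ring_hom_mult pCons.IH)
  also have "\<dots> = map_poly h (pCons a p) * map_poly h q"
    using assms by (simp add: map_poly_pCons ring_hom_0)
  finally show ?case .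
qed simp

lemma ring_hom_map_poly: "ring_hom h \<Longrightarrow> ring_hom (map_poly h)"
  unfolding ring_hom_def by (simp add: map_poly_add map_poly_mult ring_hom_def)

lemma ring_aut_map_poly:
  assumes "ring_aut h"
  shows "ring_aut (map_poly h)"
proof (rule ring_autI)
  have hom: "ring_hom h" "ring_hom (inv h)" and bij: "bij h"
    using assms ring_aut_inv[OF assms] unfolding ring_aut_def by auto
  show "ring_hom (map_poly h)" using hom(1) by (rule ring_hom_map_poly)
  show "map_poly (inv h) (map_poly h p) = p" "map_poly h (map_poly (inv h) p) = p" for p
    using hom bij
    by (simp_all add: map_poly_map_poly ring_hom_0 o_def bij_is_inj bij_is_surj surj_f_inv_f)
qed

lemma degree_map_poly_ring_aut: "ring_aut h \<Longrightarrow> degree (map_poly h p) = degree p"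
  unfolding ring_aut_def by (metis bij_is_inj degree_map_poly ring_hom_eq_0_iff)

lemma ring_aut_pcompose_shift:
  "ring_aut (\<lambda>p::'a::comm_ring_1 poly. pcompose p [:c, 1:])"
proof (rule ring_autI)
  show "ring_hom (\<lambda>p::'a poly. pcompose p [:c, 1:])"
    unfolding ring_hom_def by (simp add: pcompose_1 pcompose_add pcompose_mult)
  have "pcompose [:c, 1:] [:-c, 1:] = [:0, 1::'a:]" "pcompose [:-c, 1:] [:c, 1:] = [:0, 1::'a:]"
    by (simp_all add: pcompose_pCons)
  then show "pcompose (pcompose p [:c, 1:]) [:-c, 1:] = p"
    "pcompose (pcompose p [:-c, 1:]) [:c, 1:] = p" for p :: "'a poly"
    by (simp_all flip: pcompose_assoc)
qed

lemma ring_aut_shx_p: "ring_aut shx_p"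
  unfolding shx_p_def[abs_def] shx_pp_def[abs_def]
  by (intro ring_aut_map_poly ring_aut_fract_lift ring_aut_pcompose_shift)

lemma ring_aut_shy_p: "ring_aut shy_p"
  unfolding shy_p_def[abs_def] shy_pp_def[abs_def]
  by (intro ring_aut_map_poly ring_aut_fract_lift ring_aut_pcompose_shift)

lemma ring_aut_shz_p: "ring_aut shz_p"
  unfolding shz_p_def[abs_def] by (rule ring_aut_pcompose_shift)

lemma degree_shx_p: "degree (shx_p p) = degree p"
  and degree_shy_p: "degree (shy_p p) = degree p"
  and degree_shz_p: "degree (shz_p p) = degree p"
  unfolding shx_p_def shy_p_def shz_p_def shx_pp_def[abs_def] shy_pp_def[abs_def]
  by (simp_all add: degree_map_poly_ring_aut ring_aut_fract_lift ring_aut_map_poly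
      ring_aut_pcompose_shift degree_pcompose)

definition proper_terms :: "('a::idom poly \<times> 'a poly) list \<Rightarrow> bool" where
  "proper_terms ab \<longleftrightarrow> distinct (map snd ab) \<and>
     (\<forall>(a, b) \<in> set ab. degree a < degree b \<and> irreducible b)"

definition term_sum :: "nat \<Rightarrow> ('a::idom poly \<times> 'a poly) list \<Rightarrow> 'a poly fract" where
  "term_sum m ab = (\<Sum>(a, b) \<leftarrow> ab. Fract a (b ^ m))"

definition proper_sums :: "nat \<Rightarrow> 'a::idom poly fract set" where
  "proper_sums m = {term_sum m ab | ab. proper_terms ab}"

lemma Vm_eq_proper_sums: "Vm m = proper_sums m"
  unfolding Vm_def proper_sums_def proper_terms_def term_sum_def by blast

lemma proper_sums_iff: "f \<in> proper_sums m \<longleftrightarrow> (\<exists>ab. proper_terms ab \<and> f = term_sum m ab)"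
  unfolding proper_sums_def by blast

lemma term_sum_simps [simp]:
  "term_sum m [] = 0" "term_sum m ((a, b) # ab) = Fract a (b ^ m) + term_sum m ab"
  by (simp_all add: term_sum_def)

lemma proper_terms_Cons [simp]:
  "proper_terms ((a, b) # ab) \<longleftrightarrow>
     b \<notin> snd ` set ab \<and> degree a < degree b \<and> irreducible b \<and> proper_terms ab"
  unfolding proper_terms_def by auto

lemma Fract_add_same_denom: "c \<noteq> 0 \<Longrightarrow> Fract a c + Fract a' c = Fract (a + a') (c::'a::idom)"
  by (simp add: eq_fract algebra_simps)

lemma proper_terms_add_term:
  assumes "proper_terms ab" "degree a < degree b" "irreducible b"
  shows "\<exists>ab'. proper_terms ab' \<and> snd ` set ab' \<subseteq> insert b (snd ` set ab) \<and>
     term_sum m ab' = Fract a (b ^ m) + term_sum m ab"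
  using assms(1)
proof (induction ab)
  case Nil
  show ?case using assms by (intro exI[of _ "[(a, b)]"]) (simp add: proper_terms_def)
next
  case (Cons t ab)
  obtain a' b' where t: "t = (a', b')" by (cases t)
  show ?case
  proof (cases "b' = b")
    case True
    have "degree (a + a') < degree b"
      using Cons.prems t True assms(2) by (auto intro: le_less_trans[OF degree_add_le_max])
    moreover have "Fract a (b ^ m) + Fract a' (b ^ m) = Fract (a + a') (b ^ m)"
      using assms(3) by (intro Fract_add_same_denom) auto
    ultimately show ?thesis
      using Cons.prems t True assms(3)
      by (intro exI[of _ "(a + a', b) # ab"]) (simp add: add.assoc)
  next
    case False
    have "proper_terms ab" using Cons.prems t by simp
    with Cons.IH obtain ab' where ab': "proper_terms ab'"
      "snd ` set ab' \<subseteq> insert b (snd ` set ab)" "term_sum m ab' = Fract a (b ^ m) + term_sum m ab"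
      by blast
    then show ?thesis
      using False Cons.prems t
      by (intro exI[of _ "(a', b') # ab'"]) (auto simp: algebra_simps)
  qed
qed

lemma proper_sums_add:
  assumes "f \<in> proper_sums m" "g \<in> proper_sums m"
  shows "f + g \<in> proper_sums m"
proof -
  obtain ab where ab: "proper_terms ab" "f = term_sum m ab" using assms(1) proper_sums_iff by blast
  have "term_sum m ab + g \<in> proper_sums m" using ab(1)
  proof (induction ab)
    case (Cons t ab)
    obtain a b where t: "t = (a, b)" by (cases t)
    with Cons obtain ab' where "proper_terms ab'" "term_sum m ab + g = term_sum m ab'"
      by (auto simp: proper_sums_iff)
    with Cons.prems t proper_terms_add_term[of ab' a b m] show ?case
      by (auto simp: proper_sums_iff add.assoc)
  qed (simp add: assms(2))
  then show ?thesis using ab by simp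
qed

lemma proper_sums_zero: "0 \<in> proper_sums m"
  unfolding proper_sums_iff by (intro exI[of _ "[]"]) (simp add: proper_terms_def)

lemma proper_sums_sum:
  "finite A \<Longrightarrow> (\<And>x. x \<in> A \<Longrightarrow> g x \<in> proper_sums m) \<Longrightarrow> sum g A \<in> proper_sums m"
  by (induction A rule: finite_induct) (auto intro: proper_sums_zero proper_sums_add)

lemma proper_sums_const_mult:
  assumes "f \<in> proper_sums m"
  shows "Fract [:c:] 1 * f \<in> proper_sums m"
proof -
  obtain ab where ab: "proper_terms ab" "f = term_sum m ab" using assms proper_sums_iff by blast
  define ab' where "ab' = map (\<lambda>(a, b). (smult c a, b)) ab"
  have "proper_terms ab'"
    using ab(1) unfolding ab'_def proper_terms_def
    by (auto simp: o_def case_prod_beta intro: le_less_trans[OF degree_smult_le])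
  moreover have "Fract [:c:] 1 * f = term_sum m ab'"
    unfolding ab(2) ab'_def by (induction ab) (auto simp: algebra_simps)
  ultimately show ?thesis unfolding proper_sums_iff by blast
qed

lemma fract_lift_proper_sums:
  fixes H :: "'a::idom poly \<Rightarrow> 'a poly"
  assumes "ring_aut H" "\<And>p. degree (H p) = degree p" "f \<in> proper_sums m"
  shows "fract_lift H f \<in> proper_sums m"
proof -
  obtain ab where ab: "proper_terms ab" "f = term_sum m ab" using assms(3) proper_sums_iff by blast
  have hom: "ring_hom H" and inj: "inj H" using assms(1) unfolding ring_aut_def
    by (auto simp: bij_is_inj)
  have lift_hom: "ring_hom (fract_lift H)" using hom inj by (rule ring_hom_fract_lift)
  have lift_term: "fract_lift H (Fract a (b ^ m)) = Fract (H a) (H b ^ m)" if "irreducible b" for a b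
  proof -
    have "b ^ m \<noteq> 0" using that by auto
    then show ?thesis by (simp add: fract_lift_Fract[OF hom inj] ring_hom_power[OF hom])
  qed
  define ab' where "ab' = map (map_prod H H) ab"
  have "proper_terms ab'"
    using ab(1) assms(2) ring_aut_irreducible[OF assms(1)] inj
    unfolding ab'_def proper_terms_def
    by (fastforce simp: distinct_map inj_on_def)
  moreover have "fract_lift H f = term_sum m ab'"
    using ab(1) unfolding ab(2) ab'_def
    by (induction ab) (auto simp: ring_hom_add[OF lift_hom] ring_hom_0[OF lift_hom] lift_term)
  ultimately show ?thesis unfolding proper_sums_iff by blast
qed

lemma Sx_Vm: "f \<in> Vm m \<Longrightarrow> Sx f \<in> Vm m"
  unfolding Sx_def Vm_eq_proper_sums
  by (rule fract_lift_proper_sums[OF ring_aut_shx_p degree_shx_p])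

lemma Sy_Vm: "f \<in> Vm m \<Longrightarrow> Sy f \<in> Vm m"
  unfolding Sy_def Vm_eq_proper_sums
  by (rule fract_lift_proper_sums[OF ring_aut_shy_p degree_shy_p])

lemma Sz_Vm: "f \<in> Vm m \<Longrightarrow> Sz f \<in> Vm m"
  unfolding Sz_def Vm_eq_proper_sums
  by (rule fract_lift_proper_sums[OF ring_aut_shz_p degree_shz_p])

lemma funpow_closed:
  assumes "\<And>x. x \<in> A \<Longrightarrow> S x \<in> A" "x \<in> A"
  shows "(S ^^ n) x \<in> A"
  by (induction n) (simp_all add: assms)

theorem lemma5p1:
  fixes m :: nat and f :: "'k::field_char_0 rat3"
    and p :: "nat \<times> nat \<times> nat \<Rightarrow> 'k rat2"
  assumes "m > 0"
    and "f \<in> Vm m"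
    and "finite {t. p t \<noteq> 0}"
  shows "apply_op p f \<in> Vm m"
  unfolding apply_op_def Vm_eq_proper_sums
proof (rule proper_sums_sum[OF assms(3)], clarify)
  fix i j k
  have "(Sx ^^ i) ((Sy ^^ j) ((Sz ^^ k) f)) \<in> Vm m"
    by (intro funpow_closed Sx_Vm Sy_Vm Sz_Vm assms(2))
  then show "emb2 (p (i, j, k)) * (Sx ^^ i) ((Sy ^^ j) ((Sz ^^ k) f)) \<in> proper_sums m"
    unfolding emb2_def Vm_eq_proper_sums by (rule proper_sums_const_mult)
qed

end
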